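(* Let $r\ge2$ and suppose that $w^\ast(r-1,3)$ exists but $w^\ast(r,3)$ does not exist. Then there exists an infinite word $d_1d_2d_3\cdots$ over a finite set of positive integers that contains no additive square, i.e. there are no $m\ge0$, $\ell\ge1$ with $\sum_{i=m+1}^{m+\ell}d_i=\sum_{i=m+\ell+1}^{m+2\ell}d_i$.
   Context: An increasing sequence of positive integers $a_1<a_2<\cdots$ contains a double $k$-term arithmetic progression if there are indices $p_1<\cdots<p_k$ such that both $\{p_1,\dots,p_k\}$ and $\{a_{p_1},\dots,a_{p_k}\}$ are arithmetic progressions. For an $r$-coloring of an interval, each color class is regarded as an increasing sequence by listing its elements in increasing order; a monochromatic double $k$-term arithmetic progression is a double $k$-term arithmetic progression in some color class. For integers $r,k\ge1$, $w^\ast(r,k)$ denotes the least integer $N$, if it exists, such that every $r$-coloring of $[1,N]=\{1,\dots,N\}$ has a monochromatic double $k$-term arithmetic progression. An additive square in a word $x_1x_2\cdots$ of integers is a pair of adjacent factors (blocks of consecutive letters) of the same length and the same sum. *)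

theory Defs
  imports Main
begin

text \<open>A strictly increasing finite sequence given as a list xs (xs!0 is a_1, ...).\<close>
definition has_double_AP :: "nat list \<Rightarrow> nat \<Rightarrow> bool" where
  "has_double_AP xs k \<longleftrightarrow>
     (\<exists>p d e. d \<ge> 1 \<and> p + (k - 1) * d < length xs \<and>
        (\<forall>i<k. xs ! (p + i * d) = xs ! p + i * e))"

definition color_class :: "(nat \<Rightarrow> nat) \<Rightarrow> nat \<Rightarrow> nat \<Rightarrow> nat list" where
  "color_class c N j = sorted_list_of_set {x \<in> {1..N}. c x = j}"

definition mono_double_AP :: "(nat \<Rightarrow> nat) \<Rightarrow> nat \<Rightarrow> nat \<Rightarrow> bool" where
  "mono_double_AP c N k \<longleftrightarrow> (\<exists>j. has_double_AP (color_class c N j) k)"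

definition wstar_exists :: "nat \<Rightarrow> nat \<Rightarrow> bool" where
  "wstar_exists r k \<longleftrightarrow>
     (\<exists>N. \<forall>c. (\<forall>x\<in>{1..N}. c x < r) \<longrightarrow> mono_double_AP c N k)"

definition has_additive_square :: "(nat \<Rightarrow> nat) \<Rightarrow> bool" where
  "has_additive_square d \<longleftrightarrow>
     (\<exists>m l. l \<ge> 1 \<and> (\<Sum>i=m+1..m+l. d i) = (\<Sum>i=m+l+1..m+2*l. d i))"

end

theory Submission
  imports Defs
begin

text \<open>Fix M such that every (r-1)-colouring of [1,M] has a monochromatic double 3-AP, and take an
  r-colouring c of a long interval [1,N] without one. Then every colour meets every block of M
  consecutive integers: otherwise c uses only r-1 colours on that block, and a double 3-AP in a
  colour class of the block is a contiguous piece of a colour class of c, hence a double 3-AP of c.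
  So the gaps between consecutive elements of a colour class form a word over {1..M}, and an
  additive square in this word yields three elements of the class at equally spaced positions with
  equal differences, i.e. again a double 3-AP. Thus there are additive-square-free words over
  {1..M} of every length, and Koenig's lemma produces an infinite one.\<close>

lemma sorted_list_of_set_image_strict_mono:
  fixes f :: "'a::linorder \<Rightarrow> 'b::linorder"
  assumes "finite A" "strict_mono_on A f"
  shows "sorted_list_of_set (f ` A) = map f (sorted_list_of_set A)"
proof (rule sorted_distinct_set_unique)
  have "inj_on f A" using assms(2) by (rule strict_mono_on_imp_inj_on)
  then show "distinct (map f (sorted_list_of_set A))"
    using assms(1) by (simp add: distinct_map)
  show "sorted (map f (sorted_list_of_set A))"
    unfolding sorted_map
    by (rule sorted_wrt_mono_rel[OF _ sorted_sorted_list_of_set])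
       (use assms in \<open>auto intro: strict_mono_on_leD\<close>)
qed (use assms in auto)

lemma sorted_list_of_set_Un_less:
  fixes A B :: "'a::linorder set"
  assumes "finite A" "finite B" "\<And>a b. a \<in> A \<Longrightarrow> b \<in> B \<Longrightarrow> a < b"
  shows "sorted_list_of_set (A \<union> B) = sorted_list_of_set A @ sorted_list_of_set B"
proof (rule sorted_distinct_set_unique)
  show "sorted (sorted_list_of_set A @ sorted_list_of_set B)"
    using assms by (auto simp: sorted_append less_imp_le)
  show "distinct (sorted_list_of_set A @ sorted_list_of_set B)"
    using assms by auto
qed (use assms in auto)

lemma sum_gaps_sorted:
  fixes L :: "nat list"
  assumes "sorted L" "a \<le> b" "b < length L"
  shows "(\<Sum>i=a+1..b. L ! i - L ! (i - 1)) = L ! b - L ! a"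
  using assms(2,3)
proof (induction b rule: dec_induct)
  case (step b)
  have "L ! a \<le> L ! b" "L ! b \<le> L ! Suc b"
    using step.hyps step.prems assms(1) by (simp_all add: sorted_nth_mono)
  then show ?case
    using step by (simp add: sum.cl_ivl_Suc)
qed simp

lemma progression_index_less:
  fixes p d n :: nat
  assumes "p + (k - 1) * d < n" "i < k"
  shows "p + i * d < n"
  using mult_le_mono1[of i "k - 1" d] assms by linarith

lemma has_double_AP_map_plus:
  assumes "has_double_AP xs k"
  shows "has_double_AP (map ((+) s) xs) k"
proof -
  obtain p d e where AP: "d \<ge> 1" "p + (k - 1) * d < length xs"
    "\<forall>i<k. xs ! (p + i * d) = xs ! p + i * e"
    using assms unfolding has_double_AP_def by blast
  then have "\<forall>i<k. map ((+) s) xs ! (p + i * d) = map ((+) s) xs ! p + i * e"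
    by (simp add: progression_index_less)
  with AP show ?thesis
    unfolding has_double_AP_def length_map by blast
qed

lemma has_double_AP_infix:
  assumes "has_double_AP ys k"
  shows "has_double_AP (xs @ ys @ zs) k"
proof -
  obtain p d e where "d \<ge> 1" "p + (k - 1) * d < length ys"
    "\<forall>i<k. ys ! (p + i * d) = ys ! p + i * e"
    using assms unfolding has_double_AP_def by blast
  moreover have "(xs @ ys @ zs) ! (length xs + q) = ys ! q" if "q < length ys" for q
    using that by (simp add: nth_append)
  ultimately have "\<forall>i<k. (xs @ ys @ zs) ! (length xs + p + i * d) =
      (xs @ ys @ zs) ! (length xs + p) + i * e"
    by (simp add: progression_index_less add.assoc)
  moreover have "length xs + p + (k - 1) * d < length (xs @ ys @ zs)"
    using \<open>p + (k - 1) * d < length ys\<close> by simp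
  ultimately show ?thesis
    unfolding has_double_AP_def using \<open>d \<ge> 1\<close> by blast
qed

lemma has_double_AP_restrict_interval:
  fixes S :: "nat set"
  assumes "finite S" "has_double_AP (sorted_list_of_set (S \<inter> {a<..b})) k"
  shows "has_double_AP (sorted_list_of_set S) k"
proof -
  \<comment> \<open>the bound max a b keeps the three pieces in increasing order also when b < a\<close>
  have "S = S \<inter> {..a} \<union> (S \<inter> {a<..b} \<union> S \<inter> {max a b<..})" by auto
  then have "sorted_list_of_set S =
      sorted_list_of_set (S \<inter> {..a} \<union> (S \<inter> {a<..b} \<union> S \<inter> {max a b<..}))" by simp
  also have "\<dots> = sorted_list_of_set (S \<inter> {..a}) @
      sorted_list_of_set (S \<inter> {a<..b} \<union> S \<inter> {max a b<..})"
    using assms(1) by (intro sorted_list_of_set_Un_less) auto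
  also have "sorted_list_of_set (S \<inter> {a<..b} \<union> S \<inter> {max a b<..}) =
      sorted_list_of_set (S \<inter> {a<..b}) @ sorted_list_of_set (S \<inter> {max a b<..})"
    using assms(1) by (intro sorted_list_of_set_Un_less) auto
  finally show ?thesis using has_double_AP_infix[OF assms(2)] by simp
qed

definition hits_all_windows :: "nat \<Rightarrow> nat \<Rightarrow> nat set \<Rightarrow> bool" where
  "hits_all_windows M N S \<longleftrightarrow> (\<forall>s. s + M \<le> N \<longrightarrow> (\<exists>x\<in>S. s < x \<and> x \<le> s + M))"

lemma colour_class_hits_all_windows:
  assumes M: "\<forall>c. (\<forall>x\<in>{1..M}. c x < r - 1) \<longrightarrow> mono_double_AP c M k"
    and c: "\<forall>x\<in>{1..N}. c x < r" and no_AP: "\<not> mono_double_AP c N k" and "j < r"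
  shows "hits_all_windows M N {x\<in>{1..N}. c x = j}"
  unfolding hits_all_windows_def
proof (intro allI impI; rule ccontr)
  fix s assume "s + M \<le> N" and missing: "\<not> (\<exists>x\<in>{x\<in>{1..N}. c x = j}. s < x \<and> x \<le> s + M)"
  have window: "c (y + s) < r \<and> c (y + s) \<noteq> j" if "y \<in> {1..M}" for y
  proof -
    have "y + s \<in> {1..N}" "s < y + s" "y + s \<le> s + M" using that \<open>s + M \<le> N\<close> by auto
    then show ?thesis using c missing by blast
  qed
  define c' where "c' y = (if c (y + s) < j then c (y + s) else c (y + s) - 1)" for y
  have "\<forall>y\<in>{1..M}. c' y < r - 1"
    using window \<open>j < r\<close> by (force simp: c'_def)
  then obtain j' where "has_double_AP (color_class c' M j') k"
    using M unfolding mono_double_AP_def by blast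
  define S where "S = {x\<in>{1..N}. c x = (if j' < j then j' else j' + 1)}"
  have relabel: "c' y = j' \<longleftrightarrow> y + s \<in> S" if "y \<in> {1..M}" for y
    using window[OF that] that \<open>s + M \<le> N\<close> by (auto simp: c'_def S_def)
  then have image: "(+) s ` {y\<in>{1..M}. c' y = j'} = S \<inter> {s<..s+M}"
  proof (intro equalityI subsetI)
    fix x assume x: "x \<in> S \<inter> {s<..s+M}"
    then have "x - s \<in> {1..M}" by auto
    then have "x - s \<in> {y\<in>{1..M}. c' y = j'}" using relabel x by auto
    moreover have "x = s + (x - s)" using x by simp
    ultimately show "x \<in> (+) s ` {y\<in>{1..M}. c' y = j'}" by blast
  qed (auto simp: add.commute)
  have "sorted_list_of_set (S \<inter> {s<..s+M}) = map ((+) s) (color_class c' M j')"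
    unfolding color_class_def image[symmetric]
    by (rule sorted_list_of_set_image_strict_mono) (simp_all add: strict_mono_on_def)
  then have "has_double_AP (sorted_list_of_set (S \<inter> {s<..s+M})) k"
    using \<open>has_double_AP (color_class c' M j') k\<close> by (simp add: has_double_AP_map_plus)
  then have "has_double_AP (color_class c N (if j' < j then j' else j' + 1)) k"
    unfolding color_class_def S_def by (rule has_double_AP_restrict_interval[rotated]) simp
  then show False using no_AP unfolding mono_double_AP_def by blast
qed

lemma card_gt_of_hits_all_windows:
  assumes "S \<subseteq> {1..N}" "hits_all_windows M N S" "(n + 1) * M \<le> N"
  shows "n < card S"
proof -
  have "\<exists>x\<in>S. k * M < x \<and> x \<le> k * M + M" if "k \<le> n" for k
  proof -
    have "k * M \<le> n * M" using that by (rule mult_le_mono1)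
    then have "k * M + M \<le> N" using assms(3) add_mult_distrib[of n 1 M] by linarith
    then show ?thesis using assms(2) unfolding hits_all_windows_def by blast
  qed
  then obtain x where x: "\<And>k. k \<le> n \<Longrightarrow> x k \<in> S \<and> k * M < x k \<and> x k \<le> k * M + M"
    by metis
  have "inj_on x {..n}"
  proof (rule linorder_inj_onI')
    fix k k' assume "k \<in> {..n}" "k' \<in> {..n}" "k < k'"
    then have "x k \<le> k * M + M" "k' * M < x k'" using x by auto
    moreover have "k * M + M \<le> k' * M"
      using mult_le_mono1[of "k + 1" k' M] \<open>k < k'\<close> by simp
    ultimately show "x k \<noteq> x k'" by linarith
  qed
  moreover have "x ` {..n} \<subseteq> S" using x by auto
  moreover have "finite S" using assms(1) finite_subset by blast
  ultimately have "card {..n} \<le> card S" by (rule card_inj_on_le)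
  then show ?thesis by simp
qed

lemma gap_le_of_hits_all_windows:
  assumes "S \<subseteq> {1..N}" "hits_all_windows M N S" "i + 1 < card S"
  shows "sorted_list_of_set S ! (i + 1) \<le> sorted_list_of_set S ! i + M"
proof (rule ccontr)
  let ?L = "sorted_list_of_set S"
  have "finite S" using assms(1) finite_subset by blast
  then have L: "sorted_wrt (<) ?L" "set ?L = S" "length ?L = card S"
    by simp_all
  assume far: "\<not> ?L ! (i + 1) \<le> ?L ! i + M"
  have "?L ! (i + 1) \<in> S" using L assms(3) by (metis nth_mem)
  then have "?L ! i + M \<le> N" using far assms(1) by auto
  then obtain x where "x \<in> S" "?L ! i < x" "x \<le> ?L ! i + M"
    using assms(2) unfolding hits_all_windows_def by blast
  then obtain j where "j < card S" "x = ?L ! j" using L by (metis in_set_conv_nth)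
  have mono: "?L ! a \<le> ?L ! b" if "a \<le> b" "b < card S" for a b
    using sorted_nth_mono[OF sorted_sorted_list_of_set that(1)] that(2) L(3) by simp
  show False
  proof (cases "j \<le> i")
    case True
    then show False using mono[of j i] assms(3) \<open>?L ! i < x\<close> \<open>x = ?L ! j\<close> by simp
  next
    case False
    then show False using mono[of "i + 1" j] \<open>j < card S\<close> far \<open>x \<le> ?L ! i + M\<close> \<open>x = ?L ! j\<close>
      by simp
  qed
qed

definition additive_square_free_upto :: "nat \<Rightarrow> (nat \<Rightarrow> nat) \<Rightarrow> bool" where
  "additive_square_free_upto n d \<longleftrightarrow>
     (\<forall>m l. 1 \<le> l \<longrightarrow> m + 2 * l \<le> n \<longrightarrow>
        (\<Sum>i=m+1..m+l. d i) \<noteq> (\<Sum>i=m+l+1..m+2*l. d i))"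

lemma has_additive_square_iff:
  "has_additive_square d \<longleftrightarrow> (\<exists>n. \<not> additive_square_free_upto n d)"
  unfolding has_additive_square_def additive_square_free_upto_def by blast

lemma additive_square_free_upto_mono:
  "additive_square_free_upto n d \<Longrightarrow> k \<le> n \<Longrightarrow> additive_square_free_upto k d"
  unfolding additive_square_free_upto_def by auto

lemma additive_square_free_upto_cong:
  assumes "\<And>i. i \<in> {1..n} \<Longrightarrow> d' i = d i"
  shows "additive_square_free_upto n d' \<longleftrightarrow> additive_square_free_upto n d"
proof -
  have "sum d' {a..b} = sum d {a..b}" if "1 \<le> a" "b \<le> n" for a b
    using assms that by (intro sum.cong) auto
  then show ?thesis unfolding additive_square_free_upto_def
    by (intro all_cong1 imp_cong refl) (simp add: mult_2)
qed

lemma additive_square_free_gaps: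
  fixes L :: "nat list"
  assumes "sorted L" "n < length L" "\<not> has_double_AP L 3"
  shows "additive_square_free_upto n (\<lambda>i. L ! i - L ! (i - 1))"
  unfolding additive_square_free_upto_def
proof (intro allI impI notI)
  fix m l assume "1 \<le> l" "m + 2 * l \<le> n"
    and square: "(\<Sum>i=m+1..m+l. L ! i - L ! (i - 1)) = (\<Sum>i=m+l+1..m+2*l. L ! i - L ! (i - 1))"
  have "(\<Sum>i=m+1..m+l. L ! i - L ! (i - 1)) = L ! (m + l) - L ! m"
    using assms(1,2) \<open>m + 2 * l \<le> n\<close> by (intro sum_gaps_sorted) auto
  moreover have "(\<Sum>i=m+l+1..m+2*l. L ! i - L ! (i - 1)) = L ! (m + 2 * l) - L ! (m + l)"
    using assms(1,2) \<open>m + 2 * l \<le> n\<close> by (intro sum_gaps_sorted) auto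
  ultimately have equal: "L ! (m + l) - L ! m = L ! (m + 2 * l) - L ! (m + l)"
    using square by simp
  have "L ! m \<le> L ! (m + l)" "L ! (m + l) \<le> L ! (m + 2 * l)"
    using assms(1,2) \<open>m + 2 * l \<le> n\<close> by (simp_all add: sorted_nth_mono)
  then have "\<forall>i<3. L ! (m + i * l) = L ! m + i * (L ! (m + l) - L ! m)"
    using equal by (auto simp: less_Suc_eq numeral_3_eq_3 mult_2)
  moreover have "m + (3 - 1) * l < length L" using \<open>m + 2 * l \<le> n\<close> assms(2) by simp
  ultimately have "has_double_AP L 3"
    unfolding has_double_AP_def using \<open>1 \<le> l\<close> by blast
  then show False using assms(3) by blast
qed

definition extendable :: "(nat \<Rightarrow> (nat \<Rightarrow> 'a) \<Rightarrow> bool) \<Rightarrow> nat \<Rightarrow> (nat \<Rightarrow> 'a) \<Rightarrow> bool" where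
  "extendable P n f \<longleftrightarrow> (\<forall>k. \<exists>g. (\<forall>i\<in>{1..n}. g i = f i) \<and> P (n + k) g)"

locale finitely_branching_words =
  fixes P :: "nat \<Rightarrow> (nat \<Rightarrow> 'a) \<Rightarrow> bool" and A :: "'a set"
  assumes finite_alphabet: "finite A"
    and letters_in_alphabet: "\<And>n f i. P n f \<Longrightarrow> i \<in> {1..n} \<Longrightarrow> f i \<in> A"
    and prefix_closed: "\<And>n k f. P n f \<Longrightarrow> k \<le> n \<Longrightarrow> P k f"
    and local_on_prefix: "\<And>n f g. P n f \<Longrightarrow> (\<And>i. i \<in> {1..n} \<Longrightarrow> g i = f i) \<Longrightarrow> P n g"
begin

lemma extendable_Suc:
  assumes "extendable P n f"
  shows "\<exists>a. extendable P (Suc n) (f(Suc n := a))"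
proof (rule ccontr)
  assume "\<nexists>a. extendable P (Suc n) (f(Suc n := a))"
  then obtain K where K: "\<And>a g. (\<forall>i\<in>{1..Suc n}. g i = (f(Suc n := a)) i) \<Longrightarrow> \<not> P (Suc n + K a) g"
    unfolding extendable_def by metis
  obtain g where g: "\<forall>i\<in>{1..n}. g i = f i" "P (n + Suc (Max (K ` A))) g"
    using assms unfolding extendable_def by blast
  let ?a = "g (Suc n)"
  have "?a \<in> A" using letters_in_alphabet[OF g(2)] by simp
  then have "K ?a \<le> Max (K ` A)" using finite_alphabet by simp
  then have "P (Suc n + K ?a) g" using prefix_closed[OF g(2)] by simp
  moreover have "\<forall>i\<in>{1..Suc n}. g i = (f(Suc n := ?a)) i" using g(1) by (auto simp: le_Suc_eq)
  ultimately show False using K by blast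
qed

theorem infinite_word_if_arbitrarily_long:
  assumes "\<And>n. \<exists>f. P n f"
  shows "\<exists>d. \<forall>n. P n d"
proof -
  define next_word where "next_word n f = f(Suc n := SOME a. extendable P (Suc n) (f(Suc n := a)))"
    for n and f :: "nat \<Rightarrow> 'a"
  define F where "F = rec_nat undefined next_word"
  have F_Suc: "F (Suc n) = next_word n (F n)" for n by (simp add: F_def)
  have extendable_F: "extendable P n (F n)" for n
  proof (induction n)
    case 0
    then show ?case using assms unfolding extendable_def by simp
  next
    case (Suc n)
    then show ?case
      unfolding F_Suc next_word_def by (rule someI_ex[OF extendable_Suc])
  qed
  have F_agree: "F (n + k) i = F n i" if "i \<in> {1..n}" for n k i
    using that by (induction k) (auto simp: F_Suc next_word_def)
  define d where "d i = F i i" for i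
  have "P n d" for n
  proof -
    obtain g where "\<forall>i\<in>{1..n}. g i = F n i" "P n g"
      using extendable_F[of n] unfolding extendable_def by (metis add_0_right)
    moreover have "d i = F n i" if "i \<in> {1..n}" for i
      using F_agree[of i i "n - i"] that by (simp add: d_def)
    ultimately show ?thesis using local_on_prefix by metis
  qed
  then show ?thesis by blast
qed

end

definition square_free_word_upto :: "nat \<Rightarrow> nat \<Rightarrow> (nat \<Rightarrow> nat) \<Rightarrow> bool" where
  "square_free_word_upto M n f \<longleftrightarrow> f ` {1..n} \<subseteq> {1..M} \<and> additive_square_free_upto n f"

lemma finitely_branching_square_free_words:
  "finitely_branching_words (square_free_word_upto M) {1..M}"
proof
  show "f i \<in> {1..M}" if "square_free_word_upto M n f" "i \<in> {1..n}" for n f i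
    using that unfolding square_free_word_upto_def by blast
  show "square_free_word_upto M k f" if "square_free_word_upto M n f" "k \<le> n" for n k f
    using that additive_square_free_upto_mono[of n f k] unfolding square_free_word_upto_def by auto
  show "square_free_word_upto M n g"
    if "square_free_word_upto M n f" "\<And>i. i \<in> {1..n} \<Longrightarrow> g i = f i" for n f g
  proof -
    have "g ` {1..n} = f ` {1..n}" using that(2) by (rule image_cong[OF refl])
    then show ?thesis
      using that(1) additive_square_free_upto_cong[of n g f, OF that(2)]
      unfolding square_free_word_upto_def by simp
  qed
qed simp

lemma infinite_square_free_word:
  assumes "\<And>n. \<exists>f. square_free_word_upto M n f"
  shows "\<exists>d. finite (d ` {1..}) \<and> (\<forall>i\<ge>1. d i > 0) \<and> \<not> has_additive_square d"
proof -
  interpret finitely_branching_words "square_free_word_upto M" "{1..M}"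
    by (rule finitely_branching_square_free_words)
  obtain d where d: "\<And>n. square_free_word_upto M n d"
    using infinite_word_if_arbitrarily_long assms by blast
  have letters: "d i \<in> {1..M}" if "i \<ge> 1" for i
    using letters_in_alphabet[OF d[of i], of i] that by simp
  then have "d ` {1..} \<subseteq> {1..M}" by (intro image_subsetI) simp
  then have "finite (d ` {1..})" by (rule finite_subset) simp
  moreover have "\<forall>i\<ge>1. d i > 0" using letters by (simp add: Suc_le_eq)
  moreover have "\<not> has_additive_square d"
    using d unfolding square_free_word_upto_def has_additive_square_iff by blast
  ultimately show ?thesis by blast
qed

lemma square_free_word_of_colouring:
  assumes M: "\<forall>c. (\<forall>x\<in>{1..M}. c x < r - 1) \<longrightarrow> mono_double_AP c M 3"
    and c: "\<forall>x\<in>{1..N}. c x < r" and no_AP: "\<not> mono_double_AP c N 3"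
    and "0 < r" "(n + 1) * M \<le> N"
  shows "\<exists>f. square_free_word_upto M n f"
proof -
  define S where "S = {x\<in>{1..N}. c x = 0}"
  define L where "L = sorted_list_of_set S"
  have S: "S \<subseteq> {1..N}" "hits_all_windows M N S"
    using colour_class_hits_all_windows[OF M c no_AP \<open>0 < r\<close>] by (auto simp: S_def)
  have L: "sorted_wrt (<) L" "length L = card S"
    by (simp_all add: L_def)
  have "n < length L" using card_gt_of_hits_all_windows[OF S assms(5)] L(2) by simp
  define f where "f i = L ! i - L ! (i - 1)" for i
  have "f i \<in> {1..M}" if "i \<in> {1..n}" for i
  proof -
    have "i - 1 + 1 < card S" using that \<open>n < length L\<close> L(2) by auto
    then have "L ! (i - 1) < L ! i" "L ! i \<le> L ! (i - 1) + M"
      using that L sorted_wrt_nth_less[OF L(1), of "i - 1" i]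
        gap_le_of_hits_all_windows[OF S, of "i - 1"] by (auto simp: L_def)
    then show ?thesis by (auto simp: f_def)
  qed
  moreover have "\<not> has_double_AP L 3"
    using no_AP unfolding mono_double_AP_def color_class_def L_def S_def by blast
  then have "additive_square_free_upto n f"
    unfolding f_def using \<open>n < length L\<close>
    by (intro additive_square_free_gaps) (simp_all add: L_def)
  ultimately show ?thesis unfolding square_free_word_upto_def by blast
qed

theorem mainTheorem2:
  fixes r :: nat
  assumes "r \<ge> 2"
    and "wstar_exists (r - 1) 3"
    and "\<not> wstar_exists r 3"
  shows "\<exists>d :: nat \<Rightarrow> nat. finite (d ` {1..}) \<and> (\<forall>i\<ge>1. d i > 0) \<and>
           \<not> has_additive_square d"
proof -
  obtain M where M: "\<forall>c. (\<forall>x\<in>{1..M}. c x < r - 1) \<longrightarrow> mono_double_AP c M 3"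
    using assms(2) unfolding wstar_exists_def by blast
  have "\<exists>f. square_free_word_upto M n f" for n
  proof -
    obtain c where "\<forall>x\<in>{1..(n + 1) * M}. c x < r" "\<not> mono_double_AP c ((n + 1) * M) 3"
      using assms(3) unfolding wstar_exists_def by blast
    with square_free_word_of_colouring[OF M] assms(1) show ?thesis by simp
  qed
  then show ?thesis by (rule infinite_square_free_word)
qed

end
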